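(* Let $\lambda,\mu,\nu$ be partitions of the same integer with $\ell(\lambda)\le 9$, $\ell(\mu),\ell(\nu)\le 3$. Set $a=\lambda_{\ge4}$, $b=\lambda_{\ge2}+\lambda_{\ge7}$, $c=\lambda_{\ge3}+\lambda_{\ge8}$, $d=\lambda_2+2\lambda_3+2\lambda_4+3\lambda_5+3\lambda_6+4\lambda_7+4\lambda_8+5\lambda_9$. Then the atomic Kronecker coefficient $\tilde g_{\mu,\nu,\lambda}$ is nonzero if and only if all of the following hold: $$\nu_2+\nu_3-a\ge0,\quad \mu_2+\mu_3+\nu_2+\nu_3-b\ge0,\quad \mu_3+\nu_2+\nu_3-c\ge0,\quad \mu_2+2\mu_3+2\nu_2+3\nu_3-d\ge0.$$
   Context: Partitions are padded with zero parts and $\lambda_{\ge i}=\lambda_i+\lambda_{i+1}+\cdots$. Let $X=\{1,x_1,x_2\}$, $Y=\{1,y_1,y_2\}$, $XY=\{ab:a\in X,b\in Y\}$ ordered by $1\succ x_1\succ x_2\succ y_1\succ y_2\succ x_1y_1\succ x_1y_2\succ x_2y_1\succ x_2y_2$. Let $\mathcal P_{3,3}$ be the set of unordered pairs $\{u,v\}$ of distinct elements of $XY$, not both of the form $a\cdot1$ and not both of the form $1\cdot b$, written with $u\succ v$. Substituting $x_1=s_1t_1$, $x_2=s_1s_2t_1^2$, $y_1=s_0s_1s_2t_1^2$, $y_2=s_0s_1s_2t_1^3$, each $v/u$ becomes a monomial in $s_0,s_1,s_2,t_1$ with nonnegative exponents, and $F_{3,3}(s_0,s_1,s_2,t_1)=\prod_{\{u\succ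 v\}\in\mathcal P_{3,3}}(1-v/u)^{-1}$ (a product of 30 factors) is expanded as a power series. The atomic Kronecker coefficient is $\tilde g_{\mu,\nu,\lambda}:=$ the coefficient of $s_0^{\nu_2+\nu_3-a}\,s_1^{\mu_2+\mu_3+\nu_2+\nu_3-b}\,s_2^{\mu_3+\nu_2+\nu_3-c}\,t_1^{\mu_2+2\mu_3+2\nu_2+3\nu_3-d}$ in $F_{3,3}$ (taken to be $0$ if some exponent is negative). *)

theory Defs
  imports Main
begin

text \<open>Monomials in s0,s1,s2,t1 are represented by exponent vectors e :: nat => int,
  coordinates 0,1,2,3 standing for the exponents of s0,s1,s2,t1.\<close>

definition vec4 :: "int \<Rightarrow> int \<Rightarrow> int \<Rightarrow> int \<Rightarrow> (nat \<Rightarrow> int)" where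
  "vec4 a b c d = (\<lambda>k. if k = 0 then a else if k = 1 then b else if k = 2 then c
                       else if k = 3 then d else 0)"

text \<open>Exponent vectors after the substitution: x1 = s1 t1, x2 = s1 s2 t1^2,
  y1 = s0 s1 s2 t1^2, y2 = s0 s1 s2 t1^3; index 0 stands for the element 1.\<close>

definition xexp :: "nat \<Rightarrow> (nat \<Rightarrow> int)" where
  "xexp i = (if i = 1 then vec4 0 1 0 1 else if i = 2 then vec4 0 1 1 2 else vec4 0 0 0 0)"

definition yexp :: "nat \<Rightarrow> (nat \<Rightarrow> int)" where
  "yexp j = (if j = 1 then vec4 1 1 1 2 else if j = 2 then vec4 1 1 1 3 else vec4 0 0 0 0)"

text \<open>The element x_i y_j of XY (with x_0 = y_0 = 1) is encoded as (i,j).\<close>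

definition mexp :: "nat \<times> nat \<Rightarrow> (nat \<Rightarrow> int)" where
  "mexp p = (\<lambda>k. xexp (fst p) k + yexp (snd p) k)"

text \<open>The total order 1 > x1 > x2 > y1 > y2 > x1y1 > x1y2 > x2y1 > x2y2, listed from largest.\<close>

definition XY_list :: "(nat \<times> nat) list" where
  "XY_list = [(0,0),(1,0),(2,0),(0,1),(0,2),(1,1),(1,2),(2,1),(2,2)]"

definition XY_succ :: "nat \<times> nat \<Rightarrow> nat \<times> nat \<Rightarrow> bool" where
  "XY_succ u v \<longleftrightarrow> (\<exists>i j. i < j \<and> j < length XY_list \<and> XY_list ! i = u \<and> XY_list ! j = v)"

text \<open>P_{3,3}: unordered pairs {u,v} of distinct elements, written as (u,v) with u > v,
  not both of the form a*1 and not both of the form 1*b.\<close>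

definition P33 :: "((nat \<times> nat) \<times> (nat \<times> nat)) set" where
  "P33 = {(u,v). u \<in> set XY_list \<and> v \<in> set XY_list \<and> XY_succ u v
               \<and> \<not> (snd u = 0 \<and> snd v = 0) \<and> \<not> (fst u = 0 \<and> fst v = 0)}"

definition ratio_exp :: "(nat \<times> nat) \<times> (nat \<times> nat) \<Rightarrow> (nat \<Rightarrow> int)" where
  "ratio_exp q = (\<lambda>k. mexp (snd q) k - mexp (fst q) k)"

text \<open>Coefficient of s0^e0 s1^e1 s2^e2 t1^e3 in the power series expansion of
  F_{3,3} = prod_{q in P33} (1 - v/u)^(-1) = prod_{q in P33} sum_{n} (v/u)^n:
  the number of choices of exponents n_q (q in P33) with sum_q n_q * exp(v/u) = e.\<close>

definition F33_coeff :: "(nat \<Rightarrow> int) \<Rightarrow> nat" where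
  "F33_coeff e = (if (\<exists>k<4. e k < 0) then 0 else
     card {n :: (nat \<times> nat) \<times> (nat \<times> nat) \<Rightarrow> nat.
             (\<forall>q. q \<notin> P33 \<longrightarrow> n q = 0) \<and>
             (\<forall>k<4. (\<Sum>q\<in>P33. int (n q) * ratio_exp q k) = e k)})"

text \<open>Partitions as 1-indexed sequences nat => nat (index 0 unused and set to 0),
  weakly decreasing, with at most l nonzero parts.\<close>

definition is_partition_len :: "nat \<Rightarrow> (nat \<Rightarrow> nat) \<Rightarrow> bool" where
  "is_partition_len l p \<longleftrightarrow> p 0 = 0 \<and> (\<forall>i\<ge>1. p (Suc i) \<le> p i) \<and> (\<forall>i>l. p i = 0)"

definition psize :: "(nat \<Rightarrow> nat) \<Rightarrow> nat \<Rightarrow> nat" where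
  "psize p l = (\<Sum>i\<in>{1..l}. p i)"

definition tail9 :: "(nat \<Rightarrow> nat) \<Rightarrow> nat \<Rightarrow> nat" where
  "tail9 p i = (\<Sum>j\<in>{i..9}. p j)"

definition par_a :: "(nat \<Rightarrow> nat) \<Rightarrow> int" where
  "par_a lam = int (tail9 lam 4)"
definition par_b :: "(nat \<Rightarrow> nat) \<Rightarrow> int" where
  "par_b lam = int (tail9 lam 2) + int (tail9 lam 7)"
definition par_c :: "(nat \<Rightarrow> nat) \<Rightarrow> int" where
  "par_c lam = int (tail9 lam 3) + int (tail9 lam 8)"
definition par_d :: "(nat \<Rightarrow> nat) \<Rightarrow> int" where
  "par_d lam = int (lam 2 + 2 * lam 3 + 2 * lam 4 + 3 * lam 5 + 3 * lam 6
                    + 4 * lam 7 + 4 * lam 8 + 5 * lam 9)"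

definition atomic_kron :: "(nat \<Rightarrow> nat) \<Rightarrow> (nat \<Rightarrow> nat) \<Rightarrow> (nat \<Rightarrow> nat) \<Rightarrow> nat" where
  "atomic_kron mu nu lam = F33_coeff (vec4
      (int (nu 2 + nu 3) - par_a lam)
      (int (mu 2 + mu 3 + nu 2 + nu 3) - par_b lam)
      (int (mu 3 + nu 2 + nu 3) - par_c lam)
      (int (mu 2 + 2 * mu 3 + 2 * nu 2 + 3 * nu 3) - par_d lam))"

end

theory Submission imports Defs begin

text \<open>Every factor of F_{3,3} is (1 - m)^(-1) for a monomial m = v/u whose exponent vector is
  nonnegative and nonzero, so each coefficient counts finitely many representations.  Among the
  monomials v/u are s0 = y1/x2, s1 = x1y1/y2, s2 = x2y1/x1y2 and t1 = x1y2/x1y1, hence every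
  monomial with nonnegative exponents has at least one representation.  The coefficient is
  therefore nonzero exactly when all four exponents are nonnegative.\<close>

definition solutions ::
    "'q set \<Rightarrow> ('q \<Rightarrow> nat \<Rightarrow> int) \<Rightarrow> nat \<Rightarrow> (nat \<Rightarrow> int) \<Rightarrow> ('q \<Rightarrow> nat) set" where
  "solutions P r n e = {m. (\<forall>q. q \<notin> P \<longrightarrow> m q = 0) \<and>
                          (\<forall>k<n. (\<Sum>q\<in>P. int (m q) * r q k) = e k)}"

lemma solutions_bounded:
  assumes "finite P" and "m \<in> solutions P r n e" and "q \<in> P"
    and nonneg: "\<And>q k. q \<in> P \<Longrightarrow> k < n \<Longrightarrow> r q k \<ge> 0"
    and nonzero: "\<And>q. q \<in> P \<Longrightarrow> (\<Sum>k<n. r q k) \<ge> 1"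
  shows "m q \<le> nat (\<Sum>k<n. e k)"
proof -
  have "int (m q) \<le> int (m q) * (\<Sum>k<n. r q k)"
    using nonzero[OF \<open>q \<in> P\<close>] by (simp add: mult_le_cancel_left1)
  also have "\<dots> = (\<Sum>k<n. int (m q) * r q k)"
    by (simp add: sum_distrib_left)
  also have "\<dots> \<le> (\<Sum>k<n. \<Sum>q'\<in>P. int (m q') * r q' k)"
    by (intro sum_mono member_le_sum[where f = "\<lambda>q'. int (m q') * _ q'"])
       (use assms in auto)
  also have "\<dots> = (\<Sum>k<n. e k)"
    using \<open>m \<in> solutions P r n e\<close> by (simp add: solutions_def)
  finally show ?thesis by linarith
qed

lemma finite_solutions:
  assumes "finite P"
    and "\<And>q k. q \<in> P \<Longrightarrow> k < n \<Longrightarrow> r q k \<ge> 0"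
    and "\<And>q. q \<in> P \<Longrightarrow> (\<Sum>k<n. r q k) \<ge> 1"
  shows "finite (solutions P r n e)"
proof (rule finite_subset)
  let ?B = "{0..nat (\<Sum>k<n. e k)}"
  show "solutions P r n e \<subseteq> {m. \<forall>q. (q \<in> P \<longrightarrow> m q \<in> ?B) \<and> (q \<notin> P \<longrightarrow> m q = 0)}"
    using solutions_bounded[OF assms(1) _ _ assms(2,3)] by (auto simp: solutions_def)
  show "finite {m. \<forall>q. (q \<in> P \<longrightarrow> m q \<in> ?B) \<and> (q \<notin> P \<longrightarrow> m q = 0)}"
    using assms(1) by (intro finite_set_of_finite_funs) simp_all
qed

lemma solutions_nonempty:
  assumes "finite P"
    and units: "\<And>k. k < n \<Longrightarrow> u k \<in> P" "\<And>k j. k < n \<Longrightarrow> j < n \<Longrightarrow> r (u k) j = of_bool (j = k)"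
    and "\<forall>k<n. e k \<ge> 0"
  shows "solutions P r n e \<noteq> {}"
proof -
  define m where "m q = (\<Sum>k<n. if q = u k then nat (e k) else 0)" for q
  have "(\<Sum>q\<in>P. int (m q) * r q j) = e j" if "j < n" for j
  proof -
    have "(\<Sum>q\<in>P. int (m q) * r q j) = (\<Sum>q\<in>P. \<Sum>k<n. if q = u k then e k * r q j else 0)"
      using \<open>\<forall>k<n. e k \<ge> 0\<close> by (auto simp: m_def sum_distrib_right intro!: sum.cong)
    also have "\<dots> = (\<Sum>k<n. \<Sum>q\<in>P. if q = u k then e k * r q j else 0)"
      by (rule sum.swap)
    also have "\<dots> = (\<Sum>k<n. e k * of_bool (j = k))"
      using \<open>finite P\<close> units \<open>j < n\<close> by simp
    also have "\<dots> = e j"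
      using \<open>j < n\<close> by simp
    finally show ?thesis .
  qed
  moreover have "m q = 0" if "q \<notin> P" for q
    using units(1) that by (auto simp: m_def intro!: sum.neutral)
  ultimately have "m \<in> solutions P r n e"
    by (simp add: solutions_def)
  then show ?thesis by blast
qed

lemma card_solutions_nonzero_iff:
  assumes "finite P"
    and "\<And>q k. q \<in> P \<Longrightarrow> k < n \<Longrightarrow> r q k \<ge> 0"
    and "\<And>q. q \<in> P \<Longrightarrow> (\<Sum>k<n. r q k) \<ge> 1"
    and "\<And>k. k < n \<Longrightarrow> u k \<in> P" "\<And>k j. k < n \<Longrightarrow> j < n \<Longrightarrow> r (u k) j = of_bool (j = k)"
  shows "card (solutions P r n e) \<noteq> 0 \<longleftrightarrow> (\<forall>k<n. e k \<ge> 0)"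
proof
  assume "card (solutions P r n e) \<noteq> 0"
  then obtain m where m: "m \<in> solutions P r n e"
    by (metis card.empty ex_in_conv)
  have "(\<Sum>q\<in>P. int (m q) * r q k) \<ge> 0" if "k < n" for k
    using assms(2) that by (intro sum_nonneg) simp
  then show "\<forall>k<n. e k \<ge> 0"
    using m by (simp add: solutions_def)
next
  assume "\<forall>k<n. e k \<ge> 0"
  then show "card (solutions P r n e) \<noteq> 0"
    using finite_solutions[OF assms(1-3)] solutions_nonempty[OF assms(1,4,5)] by simp
qed

lemma P33_subset_pairs:
  "P33 \<subseteq> set [(XY_list ! i, XY_list ! j). j \<leftarrow> [0..<length XY_list], i \<leftarrow> [0..<j]]"
  unfolding P33_def XY_succ_def by force

lemma finite_P33: "finite P33"
  using P33_subset_pairs by (rule finite_subset) simp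

lemma ratio_exp_P33_nonneg_nonzero:
  assumes "q \<in> P33"
  shows "\<forall>k<4. ratio_exp q k \<ge> 0" and "(\<Sum>k<4. ratio_exp q k) \<ge> 1"
proof -
  have "list_all (\<lambda>q. (\<forall>k\<in>set [0..<4]. ratio_exp q k \<ge> 0) \<and> (\<Sum>k\<leftarrow>[0..<4]. ratio_exp q k) \<ge> 1)
          [(XY_list ! i, XY_list ! j). j \<leftarrow> [0..<length XY_list], i \<leftarrow> [0..<j]]"
    by code_simp
  then have "(\<forall>k\<in>{..<4}. ratio_exp q k \<ge> 0) \<and> (\<Sum>k<4. ratio_exp q k) \<ge> 1"
    using assms P33_subset_pairs
    unfolding list_all_iff lessThan_atLeast0 atLeastLessThan_upt sum_set_upt_conv_sum_list_nat
    by blast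
  then show "\<forall>k<4. ratio_exp q k \<ge> 0" and "(\<Sum>k<4. ratio_exp q k) \<ge> 1"
    by auto
qed

text \<open>The pairs giving s0, s1, s2, t1 are consecutive in the order on XY, starting at positions
  2, 4, 6 and 5.\<close>

definition unit_pair :: "nat \<Rightarrow> (nat \<times> nat) \<times> (nat \<times> nat)" where
  "unit_pair k = (let i = [2, 4, 6, 5] ! k in (XY_list ! i, XY_list ! Suc i))"

lemma unit_pair_in_P33:
  assumes "k < 4" shows "unit_pair k \<in> P33"
proof -
  define i :: nat where "i = [2, 4, 6, 5] ! k"
  have "\<forall>k\<in>set [0..<4]. [2, 4, 6, 5::nat] ! k < length XY_list - 1 \<and>
      (snd (fst (unit_pair k)) \<noteq> 0 \<or> snd (snd (unit_pair k)) \<noteq> 0) \<and>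
      (fst (fst (unit_pair k)) \<noteq> 0 \<or> fst (snd (unit_pair k)) \<noteq> 0)"
    by code_simp
  with assms have "i < length XY_list - 1" and not_both:
      "snd (fst (unit_pair k)) \<noteq> 0 \<or> snd (snd (unit_pair k)) \<noteq> 0"
      "fst (fst (unit_pair k)) \<noteq> 0 \<or> fst (snd (unit_pair k)) \<noteq> 0"
    unfolding i_def by auto
  then have "XY_succ (XY_list ! i) (XY_list ! Suc i)"
    unfolding XY_succ_def by (intro exI[of _ i] exI[of _ "Suc i"]) simp
  moreover have "unit_pair k = (XY_list ! i, XY_list ! Suc i)"
    by (simp add: unit_pair_def i_def Let_def)
  ultimately show ?thesis
    using not_both \<open>i < length XY_list - 1\<close> by (simp add: P33_def)
qed

lemma ratio_exp_unit_pair: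
  assumes "k < 4" "j < 4" shows "ratio_exp (unit_pair k) j = of_bool (j = k)"
proof -
  have "\<forall>k\<in>set [0..<4]. \<forall>j\<in>set [0..<4]. ratio_exp (unit_pair k) j = of_bool (j = k)"
    by code_simp
  then show ?thesis using assms by simp
qed

lemma F33_coeff_nonzero_iff: "F33_coeff e \<noteq> 0 \<longleftrightarrow> (\<forall>k<4. e k \<ge> 0)"
proof -
  have "card (solutions P33 ratio_exp 4 e) \<noteq> 0 \<longleftrightarrow> (\<forall>k<4. e k \<ge> 0)"
    by (rule card_solutions_nonzero_iff[OF finite_P33 _ _ unit_pair_in_P33 ratio_exp_unit_pair])
       (use ratio_exp_P33_nonneg_nonzero in auto)
  then show ?thesis
    by (auto simp: F33_coeff_def solutions_def not_le)
qed

lemma vec4_nonneg_iff: "(\<forall>k<4. vec4 a b c d k \<ge> 0) \<longleftrightarrow> a \<ge> 0 \<and> b \<ge> 0 \<and> c \<ge> 0 \<and> d \<ge> 0"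
  by (auto simp: vec4_def less_Suc_eq numeral_eq_Suc)

theorem proposition4p4:
  fixes lam mu nu :: "nat \<Rightarrow> nat"
  assumes "is_partition_len 9 lam" and "is_partition_len 3 mu" and "is_partition_len 3 nu"
    and "psize lam 9 = psize mu 3" and "psize mu 3 = psize nu 3"
  shows "atomic_kron mu nu lam \<noteq> 0 \<longleftrightarrow>
           int (nu 2 + nu 3) - par_a lam \<ge> 0 \<and>
           int (mu 2 + mu 3 + nu 2 + nu 3) - par_b lam \<ge> 0 \<and>
           int (mu 3 + nu 2 + nu 3) - par_c lam \<ge> 0 \<and>
           int (mu 2 + 2 * mu 3 + 2 * nu 2 + 3 * nu 3) - par_d lam \<ge> 0"
  unfolding atomic_kron_def F33_coeff_nonzero_iff vec4_nonneg_iff ..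

end
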